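(* For every tree $G$ on $n$ vertices there exists a valid search tree $P$ on $G$ which is Steiner-closed and has height at most $2\log_2 n+2$.
   Context: Search tree on a tree: a rooted tree $T$ is a valid search tree on an unrooted tree $G$ if the root $r$ of $T$ is a vertex of $G$ and the subtrees of $T\setminus r$ are valid search trees on the connected components of $G\setminus r$. Height is the maximum number of nodes on a root-to-leaf path. For vertices $a,b$ of $G$, $P(a,b)$ is the vertex set of the path from $a$ to $b$ in $G$. Convex hull: for $S\subseteq V(G)$, $\mathrm{CH}(S)$ is the subgraph of $G$ induced by $\bigcup_{a,b\in S}P(a,b)$. A set $S$ is Steiner-closed (with respect to $G$) if every vertex of $\mathrm{CH}(S)\setminus S$ has degree exactly $2$ in $\mathrm{CH}(S)$. A search tree $T$ of $G$ is Steiner-closed if for every node $v$ of $T$, the set of nodes on the path in $T$ from the root to $v$ is a Steiner-closed set with respect to $G$. *)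

theory Defs
  imports Complex_Main
begin

definition is_walk :: "('a \<Rightarrow> 'a \<Rightarrow> bool) \<Rightarrow> 'a set \<Rightarrow> 'a list \<Rightarrow> bool" where
  "is_walk E V ps \<longleftrightarrow> ps \<noteq> [] \<and> set ps \<subseteq> V \<and>
     (\<forall>i. Suc i < length ps \<longrightarrow> E (ps ! i) (ps ! Suc i))"

definition is_path :: "('a \<Rightarrow> 'a \<Rightarrow> bool) \<Rightarrow> 'a set \<Rightarrow> 'a \<Rightarrow> 'a \<Rightarrow> 'a list \<Rightarrow> bool" where
  "is_path E V a b ps \<longleftrightarrow> is_walk E V ps \<and> distinct ps \<and> hd ps = a \<and> last ps = b"

definition connected_in :: "('a \<Rightarrow> 'a \<Rightarrow> bool) \<Rightarrow> 'a set \<Rightarrow> bool" where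
  "connected_in E V \<longleftrightarrow> (\<forall>a\<in>V. \<forall>b\<in>V. \<exists>ps. is_path E V a b ps)"

definition has_cycle :: "('a \<Rightarrow> 'a \<Rightarrow> bool) \<Rightarrow> 'a set \<Rightarrow> bool" where
  "has_cycle E V \<longleftrightarrow> (\<exists>c. length c \<ge> 3 \<and> distinct c \<and> is_walk E V c \<and> E (last c) (hd c))"

definition is_tree :: "'a set \<Rightarrow> ('a \<Rightarrow> 'a \<Rightarrow> bool) \<Rightarrow> bool" where
  "is_tree V E \<longleftrightarrow> finite V \<and> V \<noteq> {} \<and>
     (\<forall>x y. E x y \<longrightarrow> x \<in> V \<and> y \<in> V) \<and>
     (\<forall>x y. E x y \<longrightarrow> E y x) \<and> (\<forall>x. \<not> E x x) \<and>
     connected_in E V \<and> \<not> has_cycle E V"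

definition components :: "('a \<Rightarrow> 'a \<Rightarrow> bool) \<Rightarrow> 'a set \<Rightarrow> 'a set set" where
  "components E S = {C. C \<noteq> {} \<and> C \<subseteq> S \<and> connected_in E C \<and>
                         (\<forall>x\<in>C. \<forall>y\<in>S. E x y \<longrightarrow> y \<in> C)}"

datatype 'a rtree = Node 'a "'a rtree list"

inductive valid_search_tree :: "('a \<Rightarrow> 'a \<Rightarrow> bool) \<Rightarrow> 'a set \<Rightarrow> 'a rtree \<Rightarrow> bool"
  for E where
  "\<lbrakk> r \<in> S; distinct (map set_rtree ts);
     set (map set_rtree ts) = components E (S - {r});
     \<forall>t\<in>set ts. valid_search_tree E (set_rtree t) t \<rbrakk>
   \<Longrightarrow> valid_search_tree E S (Node r ts)"

text \<open>Height = maximum number of nodes on a root-to-leaf path.\<close>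
fun height :: "'a rtree \<Rightarrow> nat" where
  "height (Node r ts) = Suc (Max (insert 0 (set (map height ts))))"

inductive root_path :: "'a rtree \<Rightarrow> 'a list \<Rightarrow> bool" where
  "root_path (Node r ts) [r]"
| "\<lbrakk> t \<in> set ts; root_path t p \<rbrakk> \<Longrightarrow> root_path (Node r ts) (r # p)"

definition path_verts :: "'a set \<Rightarrow> ('a \<Rightarrow> 'a \<Rightarrow> bool) \<Rightarrow> 'a \<Rightarrow> 'a \<Rightarrow> 'a set" where
  "path_verts V E a b = {x. \<exists>ps. is_path E V a b ps \<and> x \<in> set ps}"

definition hull_verts :: "'a set \<Rightarrow> ('a \<Rightarrow> 'a \<Rightarrow> bool) \<Rightarrow> 'a set \<Rightarrow> 'a set" where
  "hull_verts V E S = (\<Union>a\<in>S. \<Union>b\<in>S. path_verts V E a b)"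

definition steiner_closed :: "'a set \<Rightarrow> ('a \<Rightarrow> 'a \<Rightarrow> bool) \<Rightarrow> 'a set \<Rightarrow> bool" where
  "steiner_closed V E S \<longleftrightarrow>
     (\<forall>x \<in> hull_verts V E S - S. card {y \<in> hull_verts V E S. E x y} = 2)"

definition steiner_closed_search_tree :: "'a set \<Rightarrow> ('a \<Rightarrow> 'a \<Rightarrow> bool) \<Rightarrow> 'a rtree \<Rightarrow> bool" where
  "steiner_closed_search_tree V E T \<longleftrightarrow> (\<forall>p. root_path T p \<longrightarrow> steiner_closed V E (set p))"

end

theory Submission
  imports Defs
begin

text \<open>The search tree is built top-down. The invariant along every root path is that each vertex
  outside the set \<open>A\<close> of chosen vertices has at most two neighbours whose branch meets \<open>A\<close>; such
  an \<open>A\<close> is Steiner-closed. Each remaining component \<open>C\<close> of \<open>V - A\<close> is attached to at most two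
  vertices of \<open>A\<close>. If to at most one, the root chosen in \<open>C\<close> is a centroid. If to two vertices
  \<open>b\<^sub>1, b\<^sub>2\<close>, it is a vertex of \<open>C\<close> separating \<open>b\<^sub>1\<close> from \<open>b\<^sub>2\<close> whose
  components towards \<open>b\<^sub>1\<close> and \<open>b\<^sub>2\<close> have at most half the size of \<open>C\<close>; both choices keep the
  invariant. Every other component then has a single boundary vertex, so the potential
  \<open>(2 or 4) * |C|\<^sup>2\<close> drops by a factor of two per level and \<open>2 ^ height \<le> 2 n\<^sup>2\<close>.\<close>

definition reachable :: "('a \<Rightarrow> 'a \<Rightarrow> bool) \<Rightarrow> 'a set \<Rightarrow> 'a \<Rightarrow> 'a \<Rightarrow> bool" where
  "reachable R X a b \<longleftrightarrow> (\<lambda>u v. R u v \<and> u \<in> X \<and> v \<in> X)\<^sup>*\<^sup>* a b \<and> a \<in> X"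

lemma reachable_in: "reachable R X a b \<Longrightarrow> a \<in> X \<and> b \<in> X"
proof -
  have "(\<lambda>u v. R u v \<and> u \<in> X \<and> v \<in> X)\<^sup>*\<^sup>* a b \<Longrightarrow> a \<in> X \<Longrightarrow> b \<in> X"
    by (induction rule: rtranclp_induct) auto
  then show "reachable R X a b \<Longrightarrow> a \<in> X \<and> b \<in> X"
    unfolding reachable_def by blast
qed

lemma reachable_refl: "a \<in> X \<Longrightarrow> reachable R X a a"
  unfolding reachable_def by auto

lemma reachable_step: "R a b \<Longrightarrow> a \<in> X \<Longrightarrow> b \<in> X \<Longrightarrow> reachable R X a b"
  unfolding reachable_def by auto

lemma reachable_trans: "reachable R X a b \<Longrightarrow> reachable R X b c \<Longrightarrow> reachable R X a c"
  unfolding reachable_def by auto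

lemma reachable_induct [consumes 1, case_names refl step]:
  assumes "reachable R X a b"
    and "P a"
    and "\<And>y z. reachable R X a y \<Longrightarrow> R y z \<Longrightarrow> y \<in> X \<Longrightarrow> z \<in> X \<Longrightarrow> P y \<Longrightarrow> P z"
  shows "P b"
proof -
  have "(\<lambda>u v. R u v \<and> u \<in> X \<and> v \<in> X)\<^sup>*\<^sup>* a b" "a \<in> X"
    using assms(1) unfolding reachable_def by auto
  then show ?thesis
  proof (induction rule: rtranclp_induct)
    case (step y z)
    then show ?case using assms(3)[of y z] unfolding reachable_def by auto
  qed (use assms(2) in simp)
qed

lemma reachable_sym:
  assumes "\<And>x y. R x y \<Longrightarrow> R y x" and "reachable R X a b"
  shows "reachable R X b a"
  using assms(2)
proof (induction rule: reachable_induct)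
  case refl
  then show ?case using assms(2) reachable_in reachable_refl by metis
next
  case (step y z)
  then show ?case using assms(1) by (blast intro: reachable_step reachable_trans)
qed

lemma reachable_mono_rel:
  assumes "reachable R X a b" "\<And>u v. R u v \<Longrightarrow> u \<in> X \<Longrightarrow> v \<in> X \<Longrightarrow> R' u v" "X \<subseteq> Y"
  shows "reachable R' Y a b"
  using assms(1)
proof (induction rule: reachable_induct)
  case refl
  then show ?case using assms reachable_in reachable_refl by (metis subsetD)
next
  case (step y z)
  then show ?case using assms(2,3) by (blast intro: reachable_step reachable_trans)
qed

lemma reachable_mono: "reachable R X a b \<Longrightarrow> X \<subseteq> Y \<Longrightarrow> reachable R Y a b"
  by (erule reachable_mono_rel) auto

lemma reachable_exit:
  assumes "reachable R X a b" "a \<in> Y" "b \<notin> Y"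
  obtains u u' where "reachable R X a u" "u \<in> Y" "u' \<in> X" "u' \<notin> Y" "R u u'"
proof -
  have "b \<in> Y \<or> (\<exists>u u'. reachable R X a u \<and> u \<in> Y \<and> u' \<in> X \<and> u' \<notin> Y \<and> R u u')"
    using assms(1)
  proof (induction rule: reachable_induct)
    case (step y z)
    then show ?case by blast
  qed (use assms(2) in blast)
  then show ?thesis using that assms(3) by blast
qed

lemma reachable_restrict:
  assumes "reachable R X a b" "\<And>z. reachable R X a z \<Longrightarrow> z \<in> Y"
  shows "reachable R (X \<inter> Y) a b"
  using assms(1)
proof (induction rule: reachable_induct)
  case refl
  then show ?case using assms reachable_in reachable_refl by (metis IntI)
next
  case (step y z)
  have "reachable R X a z" using step(1-4) by (blast intro: reachable_step reachable_trans)
  then have "reachable R (X \<inter> Y) y z" using step(1-4) assms(2) by (blast intro: reachable_step)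
  then show ?case using step(5) by (blast intro: reachable_trans)
qed

lemma is_walk_Nil [simp]: "\<not> is_walk R X []"
  unfolding is_walk_def by simp

lemma is_walk_singleton [simp]: "is_walk R X [x] \<longleftrightarrow> x \<in> X"
  unfolding is_walk_def by auto

lemma is_walk_Cons_Cons [simp]:
  "is_walk R X (x # y # ps) \<longleftrightarrow> x \<in> X \<and> R x y \<and> is_walk R X (y # ps)"
  unfolding is_walk_def
  by (auto simp: less_Suc_eq_0_disj nth_Cons split: nat.splits)

lemma is_walk_set: "is_walk R X ps \<Longrightarrow> set ps \<subseteq> X"
  unfolding is_walk_def by auto

lemma is_walk_Diff: "is_walk R X ps \<Longrightarrow> x \<notin> set ps \<Longrightarrow> is_walk R (X - {x}) ps"
  unfolding is_walk_def by auto

lemma is_walk_mono_rel: "is_walk R X ps \<Longrightarrow> (\<And>u v. R u v \<Longrightarrow> R' u v) \<Longrightarrow> is_walk R' X ps"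
  unfolding is_walk_def by auto

lemma is_walk_appendD:
  assumes "is_walk R X (p @ q)"
  shows "p \<noteq> [] \<Longrightarrow> is_walk R X p" and "q \<noteq> [] \<Longrightarrow> is_walk R X q"
proof -
  have edge: "R ((p @ q) ! i) ((p @ q) ! Suc i)" if "Suc i < length p + length q" for i
    using assms that unfolding is_walk_def by simp
  show "p \<noteq> [] \<Longrightarrow> is_walk R X p"
    using assms unfolding is_walk_def
  proof (intro conjI allI impI)
    fix i assume "Suc i < length p"
    then show "R (p ! i) (p ! Suc i)" using edge[of i] by (simp add: nth_append)
  qed auto
  show "q \<noteq> [] \<Longrightarrow> is_walk R X q"
    using assms edge[of "length p + _"] unfolding is_walk_def by (auto simp: nth_append)
qed

lemma is_walk_snoc: "is_walk R X ps \<Longrightarrow> R (last ps) z \<Longrightarrow> z \<in> X \<Longrightarrow> is_walk R X (ps @ [z])"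
  by (induction ps rule: induct_list012) auto

lemma is_walk_reachable: "is_walk R X ps \<Longrightarrow> reachable R X (hd ps) (last ps)"
proof (induction ps rule: induct_list012)
  case (3 x y ps)
  have "x \<in> X" "R x y" "is_walk R X (y # ps)"
    using "3.prems" by simp_all
  then have "reachable R X x y" "reachable R X y (last (y # ps))"
    using "3.IH"(2) is_walk_set[of R X "y # ps"] by (auto intro: reachable_step)
  then show ?case by (auto intro: reachable_trans)
qed (auto intro: reachable_refl)

lemma is_path_reachable: "is_path R X a b ps \<Longrightarrow> reachable R X a b"
  unfolding is_path_def using is_walk_reachable by blast

lemma reachable_is_path:
  assumes "reachable R X a b"
  shows "\<exists>ps. is_path R X a b ps"
  using assms
proof (induction rule: reachable_induct)
  case refl
  then have "is_path R X a a [a]"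
    using assms reachable_in unfolding is_path_def by fastforce
  then show ?case by blast
next
  case (step y z)
  then obtain ps where ps: "is_path R X a y ps" by blast
  show ?case
  proof (cases "z \<in> set ps")
    case True
    then obtain pre post where split: "ps = pre @ z # post" by (meson split_list)
    have "is_walk R X (pre @ [z])"
      using ps split is_walk_appendD(1)[of R X "pre @ [z]" post] unfolding is_path_def by simp
    moreover have "hd (pre @ [z]) = a"
      using ps split unfolding is_path_def by (auto simp: hd_append)
    ultimately have "is_path R X a z (pre @ [z])"
      using ps split unfolding is_path_def by simp
    then show ?thesis by blast
  next
    case False
    have "is_walk R X (ps @ [z])"
      using ps step(2,4) is_walk_snoc[of R X ps z] unfolding is_path_def by simp
    moreover have "ps \<noteq> []"
      using ps unfolding is_path_def by auto
    ultimately have "is_path R X a z (ps @ [z])"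
      using ps False unfolding is_path_def by simp
    then show ?thesis by blast
  qed
qed

lemma connected_in_iff_reachable: "connected_in R X \<longleftrightarrow> (\<forall>a\<in>X. \<forall>b\<in>X. reachable R X a b)"
  unfolding connected_in_def
  by (meson is_path_reachable reachable_is_path)

lemma is_path_through_separator:
  assumes "is_path R X a b ps" "\<not> reachable R (X - {x}) a b"
  shows "x \<in> set ps"
proof (rule ccontr)
  assume "x \<notin> set ps"
  then have "is_path R (X - {x}) a b ps"
    using assms(1) is_walk_Diff[of R X ps x] unfolding is_path_def by simp
  then show False using assms(2) by (auto dest: is_path_reachable)
qed

text \<open>The path passes through \<open>x\<close>, and its part after \<open>x\<close> avoids \<open>p\<close>.\<close>

lemma reachable_from_separator:
  assumes ps: "is_path R X p q ps" and "p \<noteq> x" and sep: "\<not> reachable R (X - {x}) p q"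
  shows "reachable R (X - {p}) x q"
proof -
  obtain pre post where split: "ps = pre @ x # post"
    using is_path_through_separator[OF ps sep] by (meson split_list)
  have "p \<in> set pre"
    using ps split \<open>p \<noteq> x\<close> unfolding is_path_def by (cases pre) auto
  then have "p \<notin> set (x # post)"
    using ps split unfolding is_path_def by auto
  moreover have "is_walk R X (x # post)"
    using ps split is_walk_appendD(2)[of R X pre "x # post"] unfolding is_path_def by simp
  ultimately have "is_walk R (X - {p}) (x # post)"
    by (rule is_walk_Diff[rotated])
  then show ?thesis
    using is_walk_reachable ps split unfolding is_path_def by force
qed

lemma root_path_NodeE:
  assumes "root_path (Node r ts) p"
  obtains "p = [r]" | t p' where "t \<in> set ts" "root_path t p'" "p = r # p'"
  using assms by (cases rule: root_path.cases) auto

lemma two_pow_height_Node_le: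
  assumes "2 \<le> B" and "\<And>t. t \<in> set ts \<Longrightarrow> 2 * 2 ^ height t \<le> B"
  shows "2 ^ height (Node r ts) \<le> (B :: nat)"
proof -
  let ?H = "insert 0 (set (map height ts))"
  have "Max ?H \<in> ?H" by (rule Max_in) auto
  then have "2 * 2 ^ Max ?H \<le> B" using assms by auto
  then show ?thesis by simp
qed

locale symmetric_graph =
  fixes E :: "'a \<Rightarrow> 'a \<Rightarrow> bool"
  assumes edge_sym: "E x y \<Longrightarrow> E y x"
begin

abbreviation conn :: "'a set \<Rightarrow> 'a \<Rightarrow> 'a \<Rightarrow> bool" where
  "conn \<equiv> reachable E"

lemma conn_sym: "conn X a b \<Longrightarrow> conn X b a"
  by (rule reachable_sym[OF edge_sym])

lemma conn_trans: "conn X a b \<Longrightarrow> conn X b c \<Longrightarrow> conn X a c"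
  by (rule reachable_trans)

lemma conn_refl: "a \<in> X \<Longrightarrow> conn X a a"
  by (rule reachable_refl)

lemma conn_step: "E a b \<Longrightarrow> a \<in> X \<Longrightarrow> b \<in> X \<Longrightarrow> conn X a b"
  by (rule reachable_step)

lemma conn_mono: "conn X a b \<Longrightarrow> X \<subseteq> Y \<Longrightarrow> conn Y a b"
  by (rule reachable_mono)

lemma conn_in: "conn X a b \<Longrightarrow> a \<in> X \<and> b \<in> X"
  by (rule reachable_in)

lemma components_subset: "C \<in> components E S \<Longrightarrow> C \<subseteq> S \<and> C \<noteq> {}"
  unfolding components_def by blast

lemma components_closed: "C \<in> components E S \<Longrightarrow> x \<in> C \<Longrightarrow> y \<in> S \<Longrightarrow> E x y \<Longrightarrow> y \<in> C"
  unfolding components_def by blast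

lemma components_conn: "C \<in> components E S \<Longrightarrow> x \<in> C \<Longrightarrow> y \<in> C \<Longrightarrow> conn C x y"
  by (simp add: components_def connected_in_iff_reachable)

lemma component_eq_conn_class:
  assumes C: "C \<in> components E S" and x: "x \<in> C"
  shows "C = {z. conn S x z}"
proof
  show "C \<subseteq> {z. conn S x z}"
  proof
    fix z assume "z \<in> C"
    then have "conn C x z" by (rule components_conn[OF C x])
    moreover have "C \<subseteq> S" using components_subset[OF C] by blast
    ultimately show "z \<in> {z. conn S x z}"
      by (simp add: reachable_mono)
  qed
  show "{z. conn S x z} \<subseteq> C"
  proof
    fix z assume "z \<in> {z. conn S x z}"
    then have z: "conn S x z" by simp
    show "z \<in> C"
    proof (rule ccontr)
      assume "z \<notin> C"
      obtain u u' where "conn S x u" "u \<in> C" "u' \<in> S" "u' \<notin> C" "E u u'"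
        by (rule reachable_exit[OF z x \<open>z \<notin> C\<close>])
      then show False using components_closed[OF C] by blast
    qed
  qed
qed

lemma conn_class_in_components:
  assumes a: "a \<in> S"
  shows "{z. conn S a z} \<in> components E S"
proof -
  let ?K = "{z. conn S a z}"
  have conn_K: "conn ?K a b" if "conn S a b" for b
  proof -
    have "conn (S \<inter> ?K) a b" using reachable_restrict[OF that, of ?K] by blast
    moreover have "S \<inter> ?K = ?K" using reachable_in by fastforce
    ultimately show ?thesis by simp
  qed
  have "?K \<subseteq> S" using reachable_in by fastforce
  moreover have "a \<in> ?K" using a reachable_refl by fastforce
  moreover have "connected_in E ?K"
    unfolding connected_in_iff_reachable
  proof (intro ballI)
    fix b c assume "b \<in> ?K" "c \<in> ?K"
    then have "conn ?K b a" "conn ?K a c" using conn_K conn_sym by auto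
    then show "conn ?K b c" by (rule conn_trans)
  qed
  moreover have "y \<in> ?K" if "x \<in> ?K" "y \<in> S" "E x y" for x y
    using that reachable_in[of E S a x] by (blast intro: reachable_step conn_trans)
  ultimately show ?thesis unfolding components_def by blast
qed

lemma Union_components: "\<Union> (components E S) = S"
proof
  show "\<Union> (components E S) \<subseteq> S" using components_subset by blast
  show "S \<subseteq> \<Union> (components E S)"
  proof
    fix x assume "x \<in> S"
    then have "{z. conn S x z} \<in> components E S" "x \<in> {z. conn S x z}"
      by (simp_all add: conn_class_in_components reachable_refl)
    then show "x \<in> \<Union> (components E S)" by blast
  qed
qed

lemma finite_components: "finite S \<Longrightarrow> finite (components E S)"
  by (rule finite_subset[of _ "Pow S"]) (auto dest: components_subset)

lemma connected_in_self_component: "connected_in E S \<Longrightarrow> S \<noteq> {} \<Longrightarrow> S \<in> components E S"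
  unfolding components_def by blast

lemma component_of_component_Diff:
  assumes C: "C \<in> components E S" and v: "v \<in> C" and D: "D \<in> components E (C - {v})"
  shows "D \<in> components E (S - {v})"
proof -
  have "y \<in> D" if "x \<in> D" "y \<in> S - {v}" "E x y" for x y
  proof -
    have "y \<in> C" using components_closed[OF C, of x y] components_subset[OF D] that by blast
    then show ?thesis using components_closed[OF D] that by blast
  qed
  then show ?thesis
    using D components_subset[OF C] unfolding components_def by blast
qed

lemma component_Diff_adjacent:
  assumes C: "connected_in E C" and v: "v \<in> C" and K: "K \<in> components E (C - {v})"
  obtains u where "u \<in> K" "E u v"
proof -
  obtain k where k: "k \<in> K" using components_subset[OF K] by blast
  have "conn C k v" using C v k components_subset[OF K] unfolding connected_in_iff_reachable by blast
  moreover have "v \<notin> K" using components_subset[OF K] by blast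
  ultimately obtain u u' where "conn C k u" "u \<in> K" "u' \<in> C" "u' \<notin> K" "E u u'"
    by (rule reachable_exit[OF _ k])
  moreover have "u' = v" using components_closed[OF K] calculation by blast
  ultimately show thesis using that by blast
qed

lemma valid_search_tree_set: "valid_search_tree E S T \<Longrightarrow> set_rtree T = S"
proof (induction rule: valid_search_tree.induct)
  case (1 r S ts)
  have "set_rtree (Node r ts) = insert r (\<Union> (set (map set_rtree ts)))" by simp
  also have "\<dots> = insert r (S - {r})" using 1(3) Union_components by simp
  finally show ?case using 1(1) by (simp add: insert_absorb)
qed

lemma valid_search_tree_Node:
  assumes "v \<in> S" "finite S"
    and f: "\<And>D. D \<in> components E (S - {v}) \<Longrightarrow> valid_search_tree E D (f D)"
  obtains ts where "valid_search_tree E S (Node v ts)" "set ts = f ` components E (S - {v})"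
proof -
  obtain Ds where Ds: "set Ds = components E (S - {v})" "distinct Ds"
    using finite_distinct_list[OF finite_components] \<open>finite S\<close> by blast
  have "map set_rtree (map f Ds) = Ds"
    unfolding map_map by (rule map_idI) (use Ds(1) f valid_search_tree_set in auto)
  moreover have "valid_search_tree E (set_rtree (f D)) (f D)" if "D \<in> components E (S - {v})" for D
    using f[OF that] valid_search_tree_set[OF f[OF that]] by simp
  ultimately have "valid_search_tree E S (Node v (map f Ds))"
    using assms(1) Ds by (intro valid_search_tree.intros) auto
  then show thesis using that Ds(1) by simp
qed

end

section \<open>Separators in a tree\<close>

locale tree_graph =
  fixes V :: "'a set" and E :: "'a \<Rightarrow> 'a \<Rightarrow> bool"
  assumes tree: "is_tree V E"
begin

lemma finite_V: "finite V"
  using tree unfolding is_tree_def by blast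

lemma edge_in_V: "E x y \<Longrightarrow> x \<in> V \<and> y \<in> V"
  using tree unfolding is_tree_def by blast

lemma edge_irrefl: "\<not> E x x"
  using tree unfolding is_tree_def by blast

sublocale symmetric_graph E
  using tree unfolding is_tree_def by unfold_locales blast

lemma conn_V: "a \<in> V \<Longrightarrow> b \<in> V \<Longrightarrow> conn V a b"
  using tree unfolding is_tree_def connected_in_iff_reachable by blast

text \<open>Otherwise the edge \<open>v w\<close> together with the walk \<open>v \<leadsto> k \<leadsto> w\<close>, which does not use
  that edge, would contain a cycle.\<close>

lemma edge_no_detour:
  assumes e: "E v w" and vk: "conn (V - {w}) v k" and kw: "conn (V - {v}) k w"
  shows False
proof -
  define R where "R u u' \<longleftrightarrow> E u u' \<and> {u, u'} \<noteq> {v, w}" for u u'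
  have "reachable R V v k" "reachable R V k w"
    by (rule reachable_mono_rel[OF vk], auto simp: R_def doubleton_eq_iff)
       (rule reachable_mono_rel[OF kw], auto simp: R_def doubleton_eq_iff)
  then have "reachable R V v w" by (rule reachable_trans)
  then obtain ps where ps: "is_path R V v w ps"
    using reachable_is_path[of R V v w] by blast
  have "v \<noteq> w" using e edge_irrefl by blast
  then obtain u rest where ps_eq: "ps = v # u # rest"
    using ps unfolding is_path_def by (cases ps; cases "tl ps") auto
  show False
  proof (cases rest)
    case Nil
    then have "R v w" using ps ps_eq unfolding is_path_def by auto
    then show False unfolding R_def by simp
  next
    case (Cons u' rest')
    have "is_walk E V ps"
      using ps is_walk_mono_rel unfolding is_path_def R_def by blast
    moreover have "E (last ps) (hd ps)"
      using ps e edge_sym unfolding is_path_def by simp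
    moreover have "3 \<le> length ps" "distinct ps"
      using ps ps_eq Cons unfolding is_path_def by auto
    ultimately have "has_cycle E V"
      unfolding has_cycle_def by blast
    then show False using tree unfolding is_tree_def by blast
  qed
qed

lemma conn_from_separator:
  assumes "p \<in> V" "q \<in> V" "p \<noteq> x" "\<not> conn (V - {x}) p q"
  shows "conn (V - {p}) x q"
  using conn_V[OF assms(1,2)] reachable_is_path reachable_from_separator assms(3,4) by metis

lemma neighbours_separated:
  assumes "E x y1" "E x y2" "y1 \<noteq> y2"
  shows "\<not> conn (V - {x}) y1 y2"
proof
  assume y12: "conn (V - {x}) y1 y2"
  have "x \<noteq> y1" using assms edge_irrefl by blast
  then have "conn (V - {y1}) x y2"
    using assms edge_in_V by (auto intro!: reachable_step)
  then show False
    using edge_no_detour[OF assms(1)] conn_sym[OF y12] by blast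
qed

lemma path_interior_separates:
  assumes ps: "is_path E V a b ps" and z: "z \<in> set ps" "z \<noteq> a" "z \<noteq> b"
  shows "\<not> conn (V - {z}) a b"
proof
  assume ab: "conn (V - {z}) a b"
  obtain pre post where split: "ps = pre @ z # post"
    using z(1) by (meson split_list)
  obtain y post' where post: "post = y # post'"
    using ps split z(3) unfolding is_path_def by (cases post) auto
  have pre_ne: "pre \<noteq> []"
    using ps split z(2) unfolding is_path_def by auto
  have walk_pre: "is_walk E V (pre @ [z])" and walk_post: "is_walk E V (z # y # post')"
    using ps split post is_walk_appendD[of E V "pre @ [z]" "y # post'"]
      is_walk_appendD[of E V pre "z # y # post'"]
    unfolding is_path_def by auto
  have "y \<notin> set (pre @ [z])" "z \<notin> set (y # post')"
    using ps split post unfolding is_path_def by auto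
  moreover have "is_walk E V (y # post')" using walk_post by simp
  ultimately have "is_walk E (V - {y}) (pre @ [z])" "is_walk E (V - {z}) (y # post')"
    using walk_pre by (simp_all add: is_walk_Diff del: is_walk_Cons_Cons)
  then have "conn (V - {y}) a z" "conn (V - {z}) y b"
    using ps split post pre_ne is_walk_reachable unfolding is_path_def by fastforce+
  moreover have "E z y" using walk_post by simp
  ultimately show False
    using edge_no_detour ab conn_sym conn_trans by metis
qed

lemma first_step_towards:
  assumes "x \<in> V" "a \<in> V" "x \<noteq> a"
  obtains y where "E x y" "conn (V - {x}) y a"
proof -
  obtain ps where ps: "is_path E V x a ps"
    using reachable_is_path[OF conn_V[OF assms(1,2)]] by blast
  then obtain y rest where ps_eq: "ps = x # y # rest"
    using assms(3) unfolding is_path_def by (cases ps; cases "tl ps") auto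
  have "is_walk E V (y # rest)" "x \<notin> set (y # rest)"
    using ps ps_eq unfolding is_path_def by auto
  then have "is_walk E (V - {x}) (y # rest)"
    by (rule is_walk_Diff)
  then have "conn (V - {x}) y a"
    using ps ps_eq is_walk_reachable unfolding is_path_def by fastforce
  moreover have "E x y" using ps ps_eq unfolding is_path_def by simp
  ultimately show thesis using that by blast
qed

lemma path_verts_in_V:
  assumes "x \<in> path_verts V E a b"
  shows "a \<in> V \<and> b \<in> V \<and> x \<in> V"
proof -
  obtain ps where "is_path E V a b ps" "x \<in> set ps"
    using assms unfolding path_verts_def by blast
  then have "ps \<noteq> []" "set ps \<subseteq> V" "hd ps = a" "last ps = b" "x \<in> set ps"
    unfolding is_path_def is_walk_def by auto
  then show ?thesis using hd_in_set last_in_set by blast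
qed

lemma self_in_path_verts: "a \<in> V \<Longrightarrow> a \<in> path_verts V E a a"
  unfolding path_verts_def is_path_def by (auto intro!: exI[of _ "[a]"])

lemma separator_in_path_verts:
  assumes "a \<in> V" "b \<in> V" "\<not> conn (V - {x}) a b"
  shows "x \<in> path_verts V E a b"
proof -
  obtain ps where "is_path E V a b ps"
    using reachable_is_path[OF conn_V[OF assms(1,2)]] by blast
  then show ?thesis
    using is_path_through_separator[of E V a b _ x] assms(3) unfolding path_verts_def by blast
qed

lemma path_verts_separates: "x \<in> path_verts V E a b \<Longrightarrow> x = a \<or> x = b \<or> \<not> conn (V - {x}) a b"
  unfolding path_verts_def using path_interior_separates by blast

section \<open>Branches and Steiner-closed sets\<close>

text \<open>The branch at \<open>x\<close> through its neighbour \<open>y\<close> is the component of \<open>V - {x}\<close> containing \<open>y\<close>.\<close>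

definition branch_meets :: "'a \<Rightarrow> 'a \<Rightarrow> 'a set \<Rightarrow> bool" where
  "branch_meets x y S \<longleftrightarrow> (\<exists>s\<in>S. conn (V - {x}) y s)"

definition few_branches :: "'a set \<Rightarrow> bool" where
  "few_branches S \<longleftrightarrow> S \<subseteq> V \<and> (\<forall>x\<in>V - S. card {y. E x y \<and> branch_meets x y S} \<le> 2)"

lemma hull_neighbour_branch_meets:
  assumes S: "S \<subseteq> V" and x: "x \<notin> S" and y: "y \<in> hull_verts V E S" "E x y"
  shows "branch_meets x y S"
proof -
  obtain a b where ab: "a \<in> S" "b \<in> S" "y \<in> path_verts V E a b"
    using y(1) unfolding hull_verts_def by blast
  have yV: "y \<in> V" "y \<noteq> x" using edge_in_V[OF y(2)] edge_irrefl y(2) by auto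
  show ?thesis
  proof (cases "y = a \<or> y = b")
    case True
    then show ?thesis
      using ab yV reachable_refl[of y "V - {x}" E] unfolding branch_meets_def by blast
  next
    case False
    then have sep: "\<not> conn (V - {y}) a b" using path_verts_separates[OF ab(3)] by blast
    show ?thesis
    proof (rule ccontr)
      assume "\<not> ?thesis"
      then have "\<not> conn (V - {x}) y a" "\<not> conn (V - {x}) y b"
        using ab unfolding branch_meets_def by auto
      then have "conn (V - {y}) x a" "conn (V - {y}) x b"
        using conn_from_separator yV ab S by blast+
      then have "conn (V - {y}) a b" using conn_sym conn_trans by blast
      then show False using sep by blast
    qed
  qed
qed

lemma branch_meets_hull_neighbour:
  assumes S: "S \<subseteq> V" and x: "x \<in> hull_verts V E S - S"
    and y: "E x y" "branch_meets x y S"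
  shows "y \<in> hull_verts V E S"
proof -
  obtain s where s: "s \<in> S" "conn (V - {x}) y s"
    using y(2) unfolding branch_meets_def by blast
  have yV: "y \<in> V" "y \<noteq> x" using edge_in_V[OF y(1)] edge_irrefl y(1) by auto
  obtain a b where ab: "a \<in> S" "b \<in> S" "x \<in> path_verts V E a b"
    using x unfolding hull_verts_def by blast
  have sep: "\<not> conn (V - {x}) a b"
    using path_verts_separates[OF ab(3)] ab x by blast
  show ?thesis
  proof (cases "y \<in> S")
    case True
    then show ?thesis using self_in_path_verts yV unfolding hull_verts_def by blast
  next
    case False
    have "\<not> conn (V - {x}) y a \<or> \<not> conn (V - {x}) y b"
      using sep by (meson conn_sym conn_trans)
    then obtain t where t: "t \<in> S" "\<not> conn (V - {x}) y t"
      using ab by blast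
    have "\<not> conn (V - {y}) s t"
    proof
      assume "conn (V - {y}) s t"
      moreover have "conn (V - {y}) x t" using conn_from_separator yV t S by blast
      ultimately have "conn (V - {y}) x s" using conn_sym conn_trans by blast
      then show False using edge_no_detour[OF y(1)] conn_sym[OF s(2)] by blast
    qed
    then have "y \<in> path_verts V E s t" using separator_in_path_verts S s(1) t(1) by blast
    then show ?thesis using s(1) t(1) unfolding hull_verts_def by blast
  qed
qed

lemma hull_vertex_two_branches:
  assumes S: "S \<subseteq> V" and x: "x \<in> hull_verts V E S - S"
  shows "2 \<le> card {y. E x y \<and> branch_meets x y S}"
proof -
  obtain a b where ab: "a \<in> S" "b \<in> S" "x \<in> path_verts V E a b"
    using x unfolding hull_verts_def by blast
  have xV: "x \<in> V" using path_verts_in_V[OF ab(3)] by blast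
  have sep: "\<not> conn (V - {x}) a b"
    using path_verts_separates[OF ab(3)] ab x by blast
  obtain ya where ya: "E x ya" "conn (V - {x}) ya a"
    using first_step_towards[OF xV, of a] S ab x by blast
  obtain yb where yb: "E x yb" "conn (V - {x}) yb b"
    using first_step_towards[OF xV, of b] S ab x by blast
  have "ya \<noteq> yb" using ya(2) yb(2) sep by (meson conn_sym conn_trans)
  then have "card {ya, yb} = 2" by simp
  moreover have "{ya, yb} \<subseteq> {y. E x y \<and> branch_meets x y S}"
    using ya yb ab unfolding branch_meets_def by auto
  moreover have "finite {y. E x y \<and> branch_meets x y S}"
    by (rule finite_subset[OF _ finite_V]) (use edge_in_V in blast)
  ultimately show ?thesis using card_mono by metis
qed

lemma few_branches_steiner_closed:
  assumes "few_branches S"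
  shows "steiner_closed V E S"
  unfolding steiner_closed_def
proof
  fix x assume x: "x \<in> hull_verts V E S - S"
  have S: "S \<subseteq> V" using assms unfolding few_branches_def by blast
  have "{y \<in> hull_verts V E S. E x y} = {y. E x y \<and> branch_meets x y S}"
    using hull_neighbour_branch_meets branch_meets_hull_neighbour S x by blast
  moreover have "x \<in> V - S"
    using x path_verts_in_V unfolding hull_verts_def by blast
  ultimately show "card {y \<in> hull_verts V E S. E x y} = 2"
    using assms hull_vertex_two_branches[OF S x] unfolding few_branches_def by force
qed

lemma card_branches_le:
  assumes "finite W" and N: "\<And>y. y \<in> N \<Longrightarrow> E x y \<and> (\<exists>w\<in>W. conn (V - {x}) y w)"
  shows "card N \<le> card W"
proof -
  obtain f where f: "\<And>y. y \<in> N \<Longrightarrow> f y \<in> W \<and> conn (V - {x}) y (f y)"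
    using N by metis
  have "inj_on f N"
  proof (rule inj_onI)
    fix y1 y2 assume "y1 \<in> N" "y2 \<in> N" "f y1 = f y2"
    then have "conn (V - {x}) y1 y2" using f conn_sym conn_trans by metis
    then show "y1 = y2" using neighbours_separated N \<open>y1 \<in> N\<close> \<open>y2 \<in> N\<close> by blast
  qed
  then show ?thesis using card_inj_on_le[of f N W] f \<open>finite W\<close> by blast
qed

definition boundary :: "'a set \<Rightarrow> 'a set \<Rightarrow> 'a set" where
  "boundary A C = {b \<in> A. \<exists>c\<in>C. E c b}"

lemma finite_boundary: "A \<subseteq> V \<Longrightarrow> finite (boundary A C)"
  unfolding boundary_def using finite_V by (auto intro: finite_subset)

lemma boundary_Un_singleton_subset: "D \<subseteq> C \<Longrightarrow> boundary (A \<union> {v}) D \<subseteq> boundary A C \<union> {v}"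
  unfolding boundary_def by blast

lemma branch_reaches_boundary:
  assumes C: "C \<in> components E (V - A)" and x: "x \<in> C" and e: "E x y"
    and ys: "conn (V - {x}) y s" and s: "s \<in> A"
  shows "\<exists>b\<in>boundary A C. conn (V - {x}) y b"
proof (cases "y \<in> A")
  case True
  then have "y \<in> boundary A C" using x e unfolding boundary_def by blast
  moreover have "conn (V - {x}) y y" using conn_in[OF ys] by (simp add: conn_refl)
  ultimately show ?thesis by blast
next
  case False
  then have yC: "y \<in> C" using components_closed[OF C x] e edge_in_V by blast
  have "s \<notin> C" using components_subset[OF C] s by blast
  then obtain u u' where uu: "conn (V - {x}) y u" "u \<in> C" "u' \<in> V - {x}" "u' \<notin> C" "E u u'"
    by (rule reachable_exit[OF ys yC])
  have "u' \<in> boundary A C"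
    using components_closed[OF C uu(2)] uu unfolding boundary_def by blast
  moreover have "conn (V - {x}) y u'"
    using uu conn_in[OF uu(1)] by (blast intro: conn_trans conn_step)
  ultimately show ?thesis by blast
qed

lemma few_branches_insert_outside:
  assumes A: "few_branches A" and C: "C \<in> components E (V - A)" and v: "v \<in> C"
    and x: "x \<in> V - (A \<union> {v})" "x \<notin> C"
  shows "card {y. E x y \<and> branch_meets x y (A \<union> {v})} \<le> 2"
proof (cases "A = {}")
  case True
  have "card {y. E x y \<and> branch_meets x y (A \<union> {v})} \<le> card {v}"
    by (rule card_branches_le) (auto simp: True branch_meets_def)
  then show ?thesis by simp
next
  case False
  then obtain a where a: "a \<in> A" by blast
  have AV: "A \<subseteq> V" and CV: "C \<subseteq> V - A"
    using A components_subset[OF C] unfolding few_branches_def by auto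
  have "conn V v a" using conn_V CV v AV a by blast
  moreover have "a \<notin> C" using a CV by blast
  ultimately obtain u u' where uu: "conn V v u" "u \<in> C" "u' \<in> V" "u' \<notin> C" "E u u'"
    by (rule reachable_exit[OF _ v])
  have u'A: "u' \<in> A" using components_closed[OF C uu(2)] uu by blast
  have "C \<subseteq> V - {x}" using CV x by blast
  then have "conn (V - {x}) v u" using components_conn[OF C v uu(2)] conn_mono by blast
  moreover have "conn (V - {x}) u u'"
    using uu u'A x \<open>C \<subseteq> V - {x}\<close> by (intro conn_step) auto
  ultimately have vu': "conn (V - {x}) v u'" by (rule conn_trans)
  have "{y. E x y \<and> branch_meets x y (A \<union> {v})} \<subseteq> {y. E x y \<and> branch_meets x y A}"
    using vu' u'A conn_trans unfolding branch_meets_def by blast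
  moreover have "card {y. E x y \<and> branch_meets x y A} \<le> 2"
    using A x unfolding few_branches_def by blast
  moreover have "finite {y. E x y \<and> branch_meets x y A}"
    by (rule finite_subset[OF _ finite_V]) (use edge_in_V in blast)
  ultimately show ?thesis by (meson card_mono le_trans)
qed

lemma few_branches_insert_inside:
  assumes A: "few_branches A" and C: "C \<in> components E (V - A)" and v: "v \<in> C"
    and x: "x \<in> C" "x \<noteq> v"
    and root: "card (boundary A C) \<le> 1 \<or>
      (\<exists>b1 b2. boundary A C = {b1, b2} \<and> \<not> conn (V - {v}) b1 b2)"
  shows "card {y. E x y \<and> branch_meets x y (A \<union> {v})} \<le> 2"
proof -
  let ?N = "{y. E x y \<and> branch_meets x y (A \<union> {v})}"
  have AV: "A \<subseteq> V" and CV: "C \<subseteq> V - A"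
    using A components_subset[OF C] unfolding few_branches_def by auto
  have target: "\<exists>t\<in>boundary A C \<union> {v}. conn (V - {x}) y t" if "y \<in> ?N" for y
    using that branch_reaches_boundary[OF C x(1)] unfolding branch_meets_def by blast
  show ?thesis
  proof (cases "card (boundary A C) \<le> 1")
    case True
    have "card ?N \<le> card (boundary A C \<union> {v})"
      using target finite_boundary[OF AV] by (intro card_branches_le) auto
    also have "\<dots> \<le> 2" using card_Un_le[of "boundary A C" "{v}"] True by simp
    finally show ?thesis .
  next
    case False
    then obtain b1 b2 where b: "boundary A C = {b1, b2}" "\<not> conn (V - {v}) b1 b2"
      using root by blast
    have bV: "b1 \<in> V" "b2 \<in> V" using b(1) AV unfolding boundary_def by auto
    have vV: "v \<in> V" using v CV by blast
    have "\<exists>t\<in>{b1, b2}. conn (V - {x}) y t" if y: "y \<in> ?N" for y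
    proof (rule ccontr)
      assume "\<not> ?thesis"
      then have "conn (V - {x}) y v" "\<not> conn (V - {x}) y b1" "\<not> conn (V - {x}) y b2"
        using target[OF y] b(1) by auto
      then have "\<not> conn (V - {x}) v b1" "\<not> conn (V - {x}) v b2"
        using conn_trans by blast+
      then have "conn (V - {v}) x b1" "conn (V - {v}) x b2"
        using conn_from_separator vV bV x(2) by metis+
      then have "conn (V - {v}) b1 b2" by (meson conn_sym conn_trans)
      then show False using b(2) by blast
    qed
    then have "card ?N \<le> card {b1, b2}" by (intro card_branches_le) auto
    also have "\<dots> \<le> 2" by (simp add: card_insert_if)
    finally show ?thesis .
  qed
qed

lemma few_branches_insert:
  assumes A: "few_branches A" and C: "C \<in> components E (V - A)" and v: "v \<in> C"
    and root: "card (boundary A C) \<le> 1 \<or>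
      (\<exists>b1 b2. boundary A C = {b1, b2} \<and> \<not> conn (V - {v}) b1 b2)"
  shows "few_branches (A \<union> {v})"
  unfolding few_branches_def
proof (intro conjI ballI)
  show "A \<union> {v} \<subseteq> V"
    using A components_subset[OF C] v unfolding few_branches_def by auto
  fix x assume "x \<in> V - (A \<union> {v})"
  then show "card {y. E x y \<and> branch_meets x y (A \<union> {v})} \<le> 2"
    using few_branches_insert_outside[OF A C v] few_branches_insert_inside[OF A C v _ _ root]
    by (cases "x \<in> C") auto
qed

section \<open>Balanced separators\<close>

text \<open>The component of \<open>C - {w}\<close> containing \<open>v\<close> lies outside \<open>D\<close>; the others lie inside \<open>D - {w}\<close>.\<close>

lemma step_into_heavy_component:
  assumes CV: "C \<subseteq> V" and C: "connected_in E C" and v: "v \<in> C"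
    and D: "D \<in> components E (C - {v})" and heavy: "card C < 2 * card D"
  obtains w where "w \<in> D" "E v w" "\<And>K. K \<in> components E (C - {w}) \<Longrightarrow> card K < card D"
proof -
  obtain w where w: "w \<in> D" "E w v" by (rule component_Diff_adjacent[OF C v D])
  have DC: "D \<subseteq> C - {v}" using components_subset[OF D] by blast
  have finC: "finite C" using CV finite_V by (rule finite_subset)
  have finD: "finite D" using DC finC by (meson Diff_subset finite_subset)
  have "card K < card D" if K: "K \<in> components E (C - {w})" for K
  proof (cases "v \<in> K")
    case True
    have "K \<inter> D = {}"
    proof (rule ccontr)
      assume "K \<inter> D \<noteq> {}"
      then obtain k where k: "k \<in> K" "k \<in> D" by blast
      have "conn (V - {w}) v k"
        by (rule conn_mono[OF components_conn[OF K True k(1)]])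
          (use components_subset[OF K] CV in blast)
      moreover have "conn (V - {v}) k w"
        by (rule conn_mono[OF components_conn[OF D k(2) w(1)]]) (use DC CV in blast)
      ultimately show False using edge_no_detour[OF edge_sym[OF w(2)]] by blast
    qed
    then have "K \<subseteq> C - D" using components_subset[OF K] by blast
    then have "card K \<le> card (C - D)" using finC by (simp add: card_mono)
    also have "\<dots> = card C - card D" using card_Diff_subset[OF finD] DC by blast
    finally show ?thesis using heavy by linarith
  next
    case False
    have KC: "K \<subseteq> C - {w}" using components_subset[OF K] by blast
    obtain u where u: "u \<in> K" "E u w" by (rule component_Diff_adjacent[OF C _ K]) (use w DC in blast)
    have "u \<in> D" using components_closed[OF D w(1)] u KC False edge_sym by blast
    have "K \<subseteq> D"
    proof
      fix k assume "k \<in> K"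
      then have "conn (C - {v}) u k"
        by (rule conn_mono[OF components_conn[OF K u(1)]]) (use KC False in blast)
      then show "k \<in> D" using component_eq_conn_class[OF D \<open>u \<in> D\<close>] by blast
    qed
    moreover have "w \<notin> K" using KC by blast
    ultimately have "K \<subset> D" using w(1) by blast
    then show ?thesis using finD by (simp add: psubset_card_mono)
  qed
  then show thesis using that w edge_sym by blast
qed

lemma card_conn_class_less:
  assumes "\<And>K. K \<in> components E S \<Longrightarrow> card K < m" and "0 < m"
  shows "card {z. conn S c z} < m"
proof (cases "c \<in> S")
  case True
  then show ?thesis using assms(1) conn_class_in_components by blast
next
  case False
  then have "{z. conn S c z} = {}" using conn_in by blast
  then show ?thesis using assms(2) by simp
qed

lemma centroid_exists:
  assumes CV: "C \<subseteq> V" and C: "connected_in E C" and ne: "C \<noteq> {}"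
  obtains v where "v \<in> C" "\<And>D. D \<in> components E (C - {v}) \<Longrightarrow> 2 * card D \<le> card C"
proof -
  define heaviest where "heaviest v = Max (insert 0 (card ` components E (C - {v})))" for v
  have fin: "finite (insert 0 (card ` components E (C - {v})))" for v
    using finite_components finite_subset[OF CV finite_V] by simp
  obtain v where v: "v \<in> C" and min: "\<And>y. y \<in> C \<Longrightarrow> heaviest v \<le> heaviest y"
    using ex_has_least_nat[of "\<lambda>v. v \<in> C" _ heaviest] ne by blast
  have "2 * card D \<le> card C" if D: "D \<in> components E (C - {v})" for D
  proof (rule ccontr)
    assume "\<not> ?thesis"
    then obtain w where w: "w \<in> D" "\<And>K. K \<in> components E (C - {w}) \<Longrightarrow> card K < card D"
      using step_into_heavy_component[OF CV C v D] by (metis not_le)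
    have "finite D"
      using components_subset[OF D] finite_subset[OF CV finite_V] by (meson Diff_subset finite_subset)
    then have "0 < card D" using w(1) card_gt_0_iff by blast
    then have "heaviest w < card D"
      unfolding heaviest_def using w(2) fin by (simp add: Max_less_iff)
    moreover have "card D \<le> heaviest v"
      unfolding heaviest_def using D fin by (auto intro: Max_ge)
    moreover have "w \<in> C" using w(1) components_subset[OF D] by blast
    ultimately show False using min[of w] by simp
  qed
  then show thesis using that v by blast
qed

lemma separator_step_towards_neighbour:
  assumes CV: "C \<subseteq> V" and b: "b1 \<notin> C" "b2 \<in> V" and c: "E c1 b1"
    and v: "v \<in> C" and sep: "\<not> conn (V - {v}) b1 b2"
    and w: "conn (C - {v}) c1 w" "E v w"
  shows "\<not> conn (V - {w}) b1 b2"
proof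
  assume b12: "conn (V - {w}) b1 b2"
  have c1: "c1 \<in> C - {v}" and wC: "w \<in> C - {v}" using conn_in[OF w(1)] by auto
  have "b1 \<in> V - {v}" using b(1) c edge_in_V v by auto
  then have "conn (V - {v}) b1 c1" using c1 CV c edge_sym by (intro conn_step) auto
  moreover have "conn (V - {v}) c1 w" using w(1) CV conn_mono by blast
  ultimately have b1w: "conn (V - {v}) b1 w" by (rule conn_trans)
  have "\<not> conn (V - {v}) w b2" using b1w sep conn_trans by blast
  then have "conn (V - {w}) v b2" using conn_from_separator wC CV b(2) by blast
  then have "conn (V - {w}) v b1" using b12 conn_sym conn_trans by blast
  then show False using edge_no_detour[OF w(2)] b1w by blast
qed

lemma heavy_separator_improves:
  assumes CV: "C \<subseteq> V" and C: "connected_in E C" and b: "b1 \<notin> C" "b2 \<in> V"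
    and c: "E c1 b1" and v: "v \<in> C" and sep: "\<not> conn (V - {v}) b1 b2"
    and heavy: "card C < 2 * card {z. conn (C - {v}) c1 z}"
  obtains w where "w \<in> C" "\<not> conn (V - {w}) b1 b2"
    "\<And>c. card {z. conn (C - {w}) c z} < card {z. conn (C - {v}) c1 z}"
proof -
  let ?L = "{z. conn (C - {v}) c1 z}"
  have "?L \<noteq> {}" using heavy by (metis card.empty mult_0_right not_less_zero)
  then have "c1 \<in> C - {v}" using conn_in by blast
  then have L: "?L \<in> components E (C - {v})" by (rule conn_class_in_components)
  obtain w where w: "w \<in> ?L" "E v w" and smaller: "\<And>K. K \<in> components E (C - {w}) \<Longrightarrow> card K < card ?L"
    using step_into_heavy_component[OF CV C v L heavy] by blast
  have "\<not> conn (V - {w}) b1 b2"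
    using separator_step_towards_neighbour[OF CV b c v sep _ w(2)] w(1) by blast
  moreover have "w \<in> C" using w(1) conn_in by blast
  moreover have "0 < card ?L" using heavy by linarith
  ultimately show thesis using that card_conn_class_less smaller by blast
qed

lemma boundary_neighbour_separates:
  assumes CV: "C \<subseteq> V" and C: "connected_in E C"
    and b: "b1 \<notin> C" "b2 \<notin> C" "b1 \<noteq> b2" and c: "c1 \<in> C" "c2 \<in> C" "E c1 b1" "E c2 b2"
  shows "\<not> conn (V - {c1}) b1 b2"
proof
  assume "conn (V - {c1}) b1 b2"
  have "C \<subseteq> V - {b1}" using CV b by blast
  then have "conn (V - {b1}) c2 c1"
    using C c conn_mono unfolding connected_in_iff_reachable by blast
  moreover have "conn (V - {b1}) b2 c2"
    using b c CV edge_sym edge_in_V by (intro conn_step) auto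
  ultimately have "conn (V - {b1}) b2 c1" using conn_trans by blast
  then show False using edge_no_detour[OF edge_sym[OF c(3)]] \<open>conn (V - {c1}) b1 b2\<close> by blast
qed

lemma balanced_separator_exists:
  assumes CV: "C \<subseteq> V" and C: "connected_in E C"
    and b: "b1 \<notin> C" "b2 \<notin> C" "b1 \<noteq> b2" and c: "c1 \<in> C" "c2 \<in> C" "E c1 b1" "E c2 b2"
  obtains v where "v \<in> C" "\<not> conn (V - {v}) b1 b2"
    "2 * card {z. conn (C - {v}) c1 z} \<le> card C" "2 * card {z. conn (C - {v}) c2 z} \<le> card C"
proof -
  have bV: "b1 \<in> V" "b2 \<in> V" using c edge_in_V by auto
  define weight where
    "weight v = max (card {z. conn (C - {v}) c1 z}) (card {z. conn (C - {v}) c2 z})" for v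
  obtain v where v: "v \<in> C" "\<not> conn (V - {v}) b1 b2"
    and min: "\<And>y. y \<in> C \<Longrightarrow> \<not> conn (V - {y}) b1 b2 \<Longrightarrow> weight v \<le> weight y"
    using ex_has_least_nat[of "\<lambda>v. v \<in> C \<and> \<not> conn (V - {v}) b1 b2" c1 weight]
      boundary_neighbour_separates[OF CV C b c] c(1) by blast
  have "2 * card {z. conn (C - {v}) c1 z} \<le> card C"
  proof (rule ccontr)
    assume "\<not> ?thesis"
    then obtain w where w: "w \<in> C" "\<not> conn (V - {w}) b1 b2"
      and lt: "\<And>c. card {z. conn (C - {w}) c z} < card {z. conn (C - {v}) c1 z}"
      using heavy_separator_improves[OF CV C b(1) bV(2) c(3) v] by (metis not_le)
    have "weight w < weight v"
      unfolding weight_def using lt[of c1] lt[of c2] by (simp add: less_max_iff_disj)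
    then show False using min[OF w] by simp
  qed
  moreover have "2 * card {z. conn (C - {v}) c2 z} \<le> card C"
  proof (rule ccontr)
    assume "\<not> ?thesis"
    moreover have "\<not> conn (V - {v}) b2 b1" using v(2) conn_sym by blast
    ultimately obtain w where w: "w \<in> C" "\<not> conn (V - {w}) b2 b1"
      and lt: "\<And>c. card {z. conn (C - {w}) c z} < card {z. conn (C - {v}) c2 z}"
      using heavy_separator_improves[OF CV C b(2) bV(1) c(4) v(1)] by (metis not_le)
    have "weight w < weight v"
      unfolding weight_def using lt[of c1] lt[of c2] by (simp add: less_max_iff_disj)
    then show False using min[OF w(1)] w(2) conn_sym by fastforce
  qed
  ultimately show thesis using that v by blast
qed

section \<open>Construction of the search tree\<close>

definition potential :: "'a set \<Rightarrow> 'a set \<Rightarrow> nat" where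
  "potential A C = (if card (boundary A C) \<le> 1 then 2 else 4) * card C ^ 2"

lemma half_size_potential:
  assumes "2 * card D \<le> card C"
  shows "2 * potential A' D \<le> 2 * card C ^ 2"
proof -
  have "4 * card D ^ 2 \<le> card C ^ 2"
    using power_mono[OF assms, of 2] by (simp add: power_mult_distrib)
  then show ?thesis unfolding potential_def by simp
qed

lemma unique_neighbour_in_component:
  assumes C: "C \<in> components E (V - A)" and b: "b \<in> A"
    and c: "c \<in> C" "c' \<in> C" "E c b" "E c' b"
  shows "c = c'"
proof (rule ccontr)
  assume "c \<noteq> c'"
  moreover have "conn (V - {b}) c c'"
    by (rule conn_mono[OF components_conn[OF C c(1,2)]]) (use components_subset[OF C] b in blast)
  ultimately show False using neighbours_separated edge_sym c(3,4) by blast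
qed

lemma root_choice_small_boundary:
  assumes A: "few_branches A" and C: "C \<in> components E (V - A)"
    and small: "card (boundary A C) \<le> 1"
  obtains v where "v \<in> C"
    "\<And>D. D \<in> components E (C - {v}) \<Longrightarrow>
       card (boundary (A \<union> {v}) D) \<le> 2 \<and> 2 * potential (A \<union> {v}) D \<le> potential A C"
proof -
  have AV: "A \<subseteq> V" using A unfolding few_branches_def by blast
  have CV: "C \<subseteq> V" "C \<noteq> {}" and cC: "connected_in E C"
    using C unfolding components_def by auto
  obtain v where v: "v \<in> C" and half: "\<And>D. D \<in> components E (C - {v}) \<Longrightarrow> 2 * card D \<le> card C"
    using centroid_exists[OF CV(1) cC CV(2)] by blast
  have "card (boundary (A \<union> {v}) D) \<le> 2 \<and> 2 * potential (A \<union> {v}) D \<le> potential A C"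
    if D: "D \<in> components E (C - {v})" for D
  proof
    have "D \<subseteq> C" using components_subset[OF D] by blast
    then have "card (boundary (A \<union> {v}) D) \<le> card (boundary A C \<union> {v})"
      using finite_boundary[OF AV] boundary_Un_singleton_subset by (intro card_mono) auto
    also have "\<dots> \<le> 2" using card_Un_le[of "boundary A C" "{v}"] small by simp
    finally show "card (boundary (A \<union> {v}) D) \<le> 2" .
    show "2 * potential (A \<union> {v}) D \<le> potential A C"
      using half_size_potential[OF half[OF D]] small unfolding potential_def by simp
  qed
  then show thesis using that v by blast
qed

lemma boundary_of_child_cases:
  assumes C: "C \<in> components E (V - A)" and AV: "A \<subseteq> V" and two: "boundary A C = {b1, b2}"
    and c: "c1 \<in> C" "c2 \<in> C" "E c1 b1" "E c2 b2"
    and v: "v \<in> C" "\<not> conn (V - {v}) b1 b2" and D: "D \<in> components E (C - {v})"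
  obtains "c1 \<in> D" "boundary (A \<union> {v}) D \<subseteq> {b1, v}"
    | "c2 \<in> D" "boundary (A \<union> {v}) D \<subseteq> {b2, v}"
    | "boundary (A \<union> {v}) D \<subseteq> {v}"
proof -
  have DC: "D \<subseteq> C - {v}" using components_subset[OF D] by blast
  have CV: "C \<subseteq> V - A" using components_subset[OF C] by blast
  have b: "b1 \<in> A" "b2 \<in> A" using two unfolding boundary_def by auto
  have bD: "boundary (A \<union> {v}) D \<subseteq> {b1, b2, v}"
    using boundary_Un_singleton_subset[of D C A v] DC two by blast
  have b1D: "c1 \<in> D" if "b1 \<in> boundary (A \<union> {v}) D"
    using that unique_neighbour_in_component[OF C b(1) _ c(1) _ c(3)] DC
    unfolding boundary_def by blast
  have b2D: "c2 \<in> D" if "b2 \<in> boundary (A \<union> {v}) D"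
    using that unique_neighbour_in_component[OF C b(2) _ c(2) _ c(4)] DC
    unfolding boundary_def by blast
  have not_both: "\<not> (c1 \<in> D \<and> c2 \<in> D)"
  proof
    assume cD: "c1 \<in> D \<and> c2 \<in> D"
    have "D \<subseteq> V - {v}" using DC CV by blast
    then have "conn (V - {v}) c1 c2" using components_conn[OF D] cD conn_mono by blast
    moreover have "b1 \<in> V - {v}" "b2 \<in> V - {v}" "c1 \<in> V - {v}" "c2 \<in> V - {v}"
      using b AV v(1) CV cD DC by auto
    ultimately have "conn (V - {v}) b1 b2"
      using c(3,4) edge_sym conn_step conn_trans by meson
    then show False using v(2) by blast
  qed
  show thesis using that bD b1D b2D not_both by blast
qed

lemma root_choice_two_boundary:
  assumes A: "few_branches A" and C: "C \<in> components E (V - A)"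
    and two: "boundary A C = {b1, b2}" "b1 \<noteq> b2"
  obtains v where "v \<in> C" "\<not> conn (V - {v}) b1 b2"
    "\<And>D. D \<in> components E (C - {v}) \<Longrightarrow>
       card (boundary (A \<union> {v}) D) \<le> 2 \<and> 2 * potential (A \<union> {v}) D \<le> potential A C"
proof -
  have AV: "A \<subseteq> V" using A unfolding few_branches_def by blast
  have CV: "C \<subseteq> V - A" and cC: "connected_in E C"
    using C unfolding components_def by auto
  have b: "b1 \<in> A" "b2 \<in> A" using two unfolding boundary_def by auto
  obtain c1 c2 where c: "c1 \<in> C" "c2 \<in> C" "E c1 b1" "E c2 b2"
    using two unfolding boundary_def by blast
  obtain v where v: "v \<in> C" "\<not> conn (V - {v}) b1 b2"
    and half: "2 * card {z. conn (C - {v}) c1 z} \<le> card C" "2 * card {z. conn (C - {v}) c2 z} \<le> card C"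
    by (rule balanced_separator_exists[of C b1 b2 c1 c2]) (use CV cC b two(2) c in auto)
  have pot_C: "potential A C = 4 * card C ^ 2" using two unfolding potential_def by simp
  have "card (boundary (A \<union> {v}) D) \<le> 2 \<and> 2 * potential (A \<union> {v}) D \<le> potential A C"
    if D: "D \<in> components E (C - {v})" for D
  proof -
    have card_le: "card B \<le> 2" if "B \<subseteq> {b, v}" for B b
    proof -
      have "card B \<le> card {b, v}" using that by (intro card_mono) auto
      then show ?thesis by (simp add: card_insert_if split: if_splits)
    qed
    have half_D: "2 * potential (A \<union> {v}) D \<le> potential A C" if "c \<in> D" "c \<in> {c1, c2}" for c
    proof -
      have "2 * card D \<le> card C" using half component_eq_conn_class[OF D] that by auto
      then have "2 * potential (A \<union> {v}) D \<le> 2 * card C ^ 2" by (rule half_size_potential)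
      then show ?thesis using pot_C by simp
    qed
    show ?thesis
    proof (cases rule: boundary_of_child_cases[OF C AV two(1) c v D])
      case 1
      then show ?thesis using card_le[of _ b1] half_D[of c1] by simp
    next
      case 2
      then show ?thesis using card_le[of _ b2] half_D[of c2] by simp
    next
      case 3
      then have "card (boundary (A \<union> {v}) D) \<le> card {v}" by (intro card_mono) auto
      then have "potential (A \<union> {v}) D = 2 * card D ^ 2" unfolding potential_def by simp
      moreover have "card D \<le> card C"
        using components_subset[OF D] finite_subset[OF _ finite_V] CV
        by (meson Diff_subset card_mono order_trans)
      then have "card D ^ 2 \<le> card C ^ 2" by (simp add: power_mono)
      ultimately show ?thesis
        using pot_C \<open>card (boundary (A \<union> {v}) D) \<le> card {v}\<close> by simp
    qed
  qed
  then show thesis using that v by blast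
qed

lemma root_choice:
  assumes A: "few_branches A" and C: "C \<in> components E (V - A)"
    and two: "card (boundary A C) \<le> 2"
  obtains v where "v \<in> C"
    "card (boundary A C) \<le> 1 \<or> (\<exists>b1 b2. boundary A C = {b1, b2} \<and> \<not> conn (V - {v}) b1 b2)"
    "\<And>D. D \<in> components E (C - {v}) \<Longrightarrow>
       card (boundary (A \<union> {v}) D) \<le> 2 \<and> 2 * potential (A \<union> {v}) D \<le> potential A C"
proof (cases "card (boundary A C) \<le> 1")
  case True
  obtain v where "v \<in> C" "\<And>D. D \<in> components E (C - {v}) \<Longrightarrow>
      card (boundary (A \<union> {v}) D) \<le> 2 \<and> 2 * potential (A \<union> {v}) D \<le> potential A C"
    using root_choice_small_boundary[OF A C True] by blast
  then show thesis using that True by blast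
next
  case False
  then have "card (boundary A C) = 2" using two by simp
  then obtain b1 b2 where b: "boundary A C = {b1, b2}" "b1 \<noteq> b2"
    by (meson card_2_iff)
  obtain v where "v \<in> C" "\<not> conn (V - {v}) b1 b2" "\<And>D. D \<in> components E (C - {v}) \<Longrightarrow>
      card (boundary (A \<union> {v}) D) \<le> 2 \<and> 2 * potential (A \<union> {v}) D \<le> potential A C"
    using root_choice_two_boundary[OF A C b] by blast
  then show thesis using that b(1) by blast
qed

lemma steiner_search_tree_exists:
  assumes "few_branches A" "C \<in> components E (V - A)" "card (boundary A C) \<le> 2"
  shows "\<exists>T. valid_search_tree E C T \<and> (\<forall>p. root_path T p \<longrightarrow> few_branches (A \<union> set p)) \<and>
    2 ^ height T \<le> potential A C"
  using assms
proof (induction "card C" arbitrary: A C rule: less_induct)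
  case less
  have finC: "finite C" using less.prems(2) finite_V components_subset finite_subset by blast
  obtain v where v: "v \<in> C"
    and root: "card (boundary A C) \<le> 1 \<or> (\<exists>b1 b2. boundary A C = {b1, b2} \<and> \<not> conn (V - {v}) b1 b2)"
    and child: "\<And>D. D \<in> components E (C - {v}) \<Longrightarrow>
      card (boundary (A \<union> {v}) D) \<le> 2 \<and> 2 * potential (A \<union> {v}) D \<le> potential A C"
    using root_choice[OF less.prems] by blast
  have Av: "few_branches (A \<union> {v})" by (rule few_branches_insert[OF less.prems(1,2) v root])
  have "\<exists>T. valid_search_tree E D T \<and> (\<forall>p. root_path T p \<longrightarrow> few_branches (A \<union> {v} \<union> set p)) \<and>
      2 ^ height T \<le> potential (A \<union> {v}) D" if D: "D \<in> components E (C - {v})" for D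
  proof -
    have "D \<subset> C" using components_subset[OF D] v by blast
    then have "card D < card C" using finC by (rule psubset_card_mono[rotated])
    moreover have "V - A - {v} = V - (A \<union> {v})" by blast
    then have "D \<in> components E (V - (A \<union> {v}))"
      using component_of_component_Diff[OF less.prems(2) v D] by simp
    moreover have "card (boundary (A \<union> {v}) D) \<le> 2" using child[OF D] by blast
    ultimately show ?thesis using less.hyps[of D "A \<union> {v}"] Av by blast
  qed
  then obtain f where f: "\<And>D. D \<in> components E (C - {v}) \<Longrightarrow> valid_search_tree E D (f D) \<and>
      (\<forall>p. root_path (f D) p \<longrightarrow> few_branches (A \<union> {v} \<union> set p)) \<and>
      2 ^ height (f D) \<le> potential (A \<union> {v}) D"
    by metis
  obtain ts where T: "valid_search_tree E C (Node v ts)" and ts: "set ts = f ` components E (C - {v})"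
    using valid_search_tree_Node[OF v finC] f by blast
  have "few_branches (A \<union> set p)" if "root_path (Node v ts) p" for p
    using that
  proof (cases rule: root_path_NodeE)
    case 1
    then show ?thesis using Av by simp
  next
    case (2 t p')
    then show ?thesis using f ts by (auto simp: Un_assoc)
  qed
  moreover have "2 ^ height (Node v ts) \<le> potential A C"
  proof (rule two_pow_height_Node_le)
    have "1 \<le> card C" using finC v by (metis card_0_eq empty_iff less_one not_le)
    then show "2 \<le> potential A C" unfolding potential_def by simp
    show "2 * 2 ^ height t \<le> potential A C" if "t \<in> set ts" for t
      using that ts f child by fastforce
  qed
  ultimately show ?case using T by blast
qed

end

lemma height_bound_of_two_pow_le:
  fixes h n :: nat
  assumes "2 ^ h \<le> 2 * n ^ 2" and "0 < n"
  shows "real h \<le> 2 * log 2 (real n) + 1"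
proof -
  have "real (2 ^ h) \<le> real (2 * n ^ 2)" using assms(1) by (simp only: of_nat_le_iff)
  then have "(2::real) powr real h \<le> 2 * real n ^ 2" by (simp add: powr_realpow)
  then have "real h \<le> log 2 (2 * real n ^ 2)"
    using assms(2) by (simp add: le_log_iff)
  also have "\<dots> = 2 * log 2 (real n) + 1"
    using assms(2) by (simp add: log_mult log_nat_power)
  finally show ?thesis .
qed

theorem mainTheorem7:
  fixes V :: "'a set" and E :: "'a \<Rightarrow> 'a \<Rightarrow> bool"
  assumes "is_tree V E"
  shows "\<exists>P. valid_search_tree E V P \<and> steiner_closed_search_tree V E P \<and>
             real (height P) \<le> 2 * log 2 (real (card V)) + 2"
proof -
  interpret tree_graph V E by unfold_locales (rule assms)
  have "few_branches {}" unfolding few_branches_def branch_meets_def by simp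
  moreover have "V \<in> components E (V - {})"
    using assms connected_in_self_component unfolding is_tree_def by simp
  moreover have no_boundary: "boundary {} V = {}" unfolding boundary_def by simp
  ultimately obtain T where T: "valid_search_tree E V T"
    and paths: "\<forall>p. root_path T p \<longrightarrow> few_branches ({} \<union> set p)"
    and pot: "2 ^ height T \<le> potential {} V"
    using steiner_search_tree_exists[of "{}" V] by auto
  have "steiner_closed_search_tree V E T"
    using paths few_branches_steiner_closed unfolding steiner_closed_search_tree_def by simp
  moreover have "real (height T) \<le> 2 * log 2 (real (card V)) + 1"
  proof (rule height_bound_of_two_pow_le)
    show "2 ^ height T \<le> 2 * card V ^ 2" using pot no_boundary unfolding potential_def by simp
    show "0 < card V" using assms unfolding is_tree_def by (simp add: card_gt_0_iff)
  qed
  ultimately show ?thesis using T by fastforce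
qed

end
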